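(* Let $G$ be a group with a finite generating set $S$ not containing the identity $e$, and let $d_W$ and $d_C$ be the word metric and the cardinal metric on $G$ with respect to $S$. Then every isometry $T\colon (G,d_C)\to(G,d_W)$ is of the form $T=L_a\circ\tilde T$, where $a\in G$, $L_a\colon g\mapsto ag$, and $\tilde T\colon(G,d_C)\to(G,d_W)$ is an isometry with $\tilde T(e)=e$ and $\tilde T(S)\subseteq S\cup S^{-1}$. Furthermore, $\tilde T$ is a nonexpansive map on $(G,d_W)$, i.e. $d_W(\tilde T(g),\tilde T(h))\le d_W(g,h)$ for all $g,h\in G$.
   Context: The word metric: $d_W(g,g)=0$ and for $g\ne h$, $d_W(g,h)$ is the least $n\in\mathbb{N}$ such that $g^{-1}h=s_1^{\epsilon_1}\cdots s_n^{\epsilon_n}$ with $s_i\in S$, $\epsilon_i\in\{\pm1\}$. The cardinal norm is $\|g\| = \min\{|A| : A\subseteq S,\ g\in\langle A\rangle\}$, where $\langle A\rangle$ is the subgroup generated by $A$, and $d_C(g,h)=\|g^{-1}h\|$. An isometry here means a distance-preserving map $T$, i.e. $d_W(T(g),T(h))=d_C(g,h)$ for all $g,h$. *)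

theory Defs
  imports "HOL-Algebra.Generated_Groups"
begin

fun word_eval :: "('a, 'b) monoid_scheme \<Rightarrow> ('a \<times> bool) list \<Rightarrow> 'a" where
  "word_eval G [] = \<one>\<^bsub>G\<^esub>"
| "word_eval G ((s, e) # w) =
     (if e then s else inv\<^bsub>G\<^esub> s) \<otimes>\<^bsub>G\<^esub> word_eval G w"

definition word_dist :: "('a, 'b) monoid_scheme \<Rightarrow> 'a set \<Rightarrow> 'a \<Rightarrow> 'a \<Rightarrow> nat" where
  "word_dist G S g h =
     (LEAST n. \<exists>w. length w = n \<and> fst ` set w \<subseteq> S \<and>
                   word_eval G w = inv\<^bsub>G\<^esub> g \<otimes>\<^bsub>G\<^esub> h)"

definition cardinal_norm :: "('a, 'b) monoid_scheme \<Rightarrow> 'a set \<Rightarrow> 'a \<Rightarrow> nat" where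
  "cardinal_norm G S g = (LEAST n. \<exists>A. A \<subseteq> S \<and> card A = n \<and> g \<in> generate G A)"

definition cardinal_dist :: "('a, 'b) monoid_scheme \<Rightarrow> 'a set \<Rightarrow> 'a \<Rightarrow> 'a \<Rightarrow> nat" where
  "cardinal_dist G S g h = cardinal_norm G S (inv\<^bsub>G\<^esub> g \<otimes>\<^bsub>G\<^esub> h)"

definition CW_isometry :: "('a, 'b) monoid_scheme \<Rightarrow> 'a set \<Rightarrow> ('a \<Rightarrow> 'a) \<Rightarrow> bool" where
  "CW_isometry G S T \<longleftrightarrow> T \<in> carrier G \<rightarrow> carrier G \<and>
     (\<forall>g\<in>carrier G. \<forall>h\<in>carrier G. word_dist G S (T g) (T h) = cardinal_dist G S g h)"

end

theory Submission
  imports Defs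
begin

text \<open>Both metrics are left invariant, so composing T with the left translation by the inverse
of T e yields an isometry fixing e. A generator has cardinal norm 1, hence its image lies at word
distance 1 from e, i.e. in S or S\<inverse>. Finally, a word of length n uses at most n distinct
generators, so the cardinal metric is dominated by the word metric; as the normalized map turns
cardinal distances into word distances, it is nonexpansive for the word metric.\<close>

context group
begin

lemma word_eval_closed:
  assumes "fst ` set w \<subseteq> carrier G"
  shows "word_eval G w \<in> carrier G"
  using assms by (induction w) auto

lemma word_eval_append:
  assumes "fst ` set v \<subseteq> carrier G" "fst ` set w \<subseteq> carrier G"
  shows "word_eval G (v @ w) = word_eval G v \<otimes> word_eval G w"
  using assms by (induction v) (auto simp: m_assoc word_eval_closed)

lemma word_eval_in_generate:
  assumes "A \<subseteq> carrier G" "fst ` set w \<subseteq> A"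
  shows "word_eval G w \<in> generate G A"
  using assms(2) by (induction w) (auto intro: generate.one generate.eng[OF generate.incl] generate.eng[OF generate.inv])

lemma generate_imp_word_eval:
  assumes "S \<subseteq> carrier G" "x \<in> generate G S"
  shows "\<exists>w. fst ` set w \<subseteq> S \<and> word_eval G w = x"
  using assms(2)
proof (induction rule: generate.induct)
  case one
  show ?case by (rule exI[of _ "[]"]) simp
next
  case (incl h)
  then show ?case using assms(1) by (intro exI[of _ "[(h, True)]"]) auto
next
  case (inv h)
  then show ?case using assms(1) by (intro exI[of _ "[(h, False)]"]) auto
next
  case (eng h1 h2)
  then obtain v w where "fst ` set v \<subseteq> S" "word_eval G v = h1"
    "fst ` set w \<subseteq> S" "word_eval G w = h2" by blast
  then show ?case using assms(1) word_eval_append[of v w]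
    by (intro exI[of _ "v @ w"]) auto
qed

lemma word_dist_witness:
  assumes "S \<subseteq> carrier G" "generate G S = carrier G" "g \<in> carrier G" "h \<in> carrier G"
  obtains w where "length w = word_dist G S g h" "fst ` set w \<subseteq> S"
    "word_eval G w = inv g \<otimes> h"
proof -
  obtain w where "fst ` set w \<subseteq> S" "word_eval G w = inv g \<otimes> h"
    using generate_imp_word_eval[OF assms(1), of "inv g \<otimes> h"] assms by auto
  then have "\<exists>n w. length w = n \<and> fst ` set w \<subseteq> S \<and> word_eval G w = inv g \<otimes> h"
    by blast
  then have "\<exists>w. length w = word_dist G S g h \<and> fst ` set w \<subseteq> S \<and> word_eval G w = inv g \<otimes> h"
    unfolding word_dist_def by (rule LeastI_ex)
  with that show thesis by blast
qed

lemma word_dist_left_mult: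
  assumes "a \<in> carrier G" "g \<in> carrier G" "h \<in> carrier G"
  shows "word_dist G S (a \<otimes> g) (a \<otimes> h) = word_dist G S g h"
proof -
  have "inv a \<otimes> (a \<otimes> h) = h"
    using assms by (simp flip: m_assoc)
  then have "inv (a \<otimes> g) \<otimes> (a \<otimes> h) = inv g \<otimes> h"
    using assms by (simp add: inv_mult_group m_assoc)
  then show ?thesis unfolding word_dist_def by simp
qed

lemma CW_isometry_left_mult:
  assumes "CW_isometry G S T" "a \<in> carrier G"
  shows "CW_isometry G S (\<lambda>g. a \<otimes> T g)"
  using assms word_dist_left_mult[of a] unfolding CW_isometry_def by (auto simp: Pi_iff)

lemma cardinal_dist_le_word_dist:
  assumes "S \<subseteq> carrier G" "generate G S = carrier G" "g \<in> carrier G" "h \<in> carrier G"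
  shows "cardinal_dist G S g h \<le> word_dist G S g h"
proof -
  obtain w where w: "length w = word_dist G S g h" "fst ` set w \<subseteq> S"
    "word_eval G w = inv g \<otimes> h"
    using word_dist_witness[OF assms] .
  have "inv g \<otimes> h \<in> generate G (fst ` set w)"
    using word_eval_in_generate[of "fst ` set w" w] w assms(1) by auto
  then have "cardinal_norm G S (inv g \<otimes> h) \<le> card (fst ` set w)"
    unfolding cardinal_norm_def using w(2) by (intro Least_le) blast
  also have "\<dots> \<le> length w"
    using card_image_le card_length le_trans by blast
  finally show ?thesis unfolding cardinal_dist_def using w(1) by simp
qed

lemma CW_isometry_nonexpansive:
  assumes "CW_isometry G S T" "S \<subseteq> carrier G" "generate G S = carrier G"
    "g \<in> carrier G" "h \<in> carrier G"
  shows "word_dist G S (T g) (T h) \<le> word_dist G S g h"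
  using assms cardinal_dist_le_word_dist unfolding CW_isometry_def by simp

lemma cardinal_norm_generator:
  assumes "finite S" "\<one> \<notin> S" "s \<in> S"
  shows "cardinal_norm G S s = 1"
proof -
  have "\<exists>n A. A \<subseteq> S \<and> card A = n \<and> s \<in> generate G A"
    using assms(3) by (blast intro: generate.incl)
  then have "\<exists>A. A \<subseteq> S \<and> card A = cardinal_norm G S s \<and> s \<in> generate G A"
    unfolding cardinal_norm_def by (rule LeastI_ex)
  then obtain A where A: "A \<subseteq> S" "card A = cardinal_norm G S s" "s \<in> generate G A"
    by blast
  have "A \<noteq> {}"
    using A(3) generate_empty assms(2,3) by auto
  then have "cardinal_norm G S s \<noteq> 0"
    using A(1,2) assms(1) finite_subset by fastforce
  moreover have "cardinal_norm G S s \<le> 1"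
    unfolding cardinal_norm_def using assms(3)
    by (intro Least_le exI[of _ "{s}"]) (auto intro: generate.incl)
  ultimately show ?thesis by simp
qed

lemma word_dist_eq_1_imp_letter:
  assumes "S \<subseteq> carrier G" "generate G S = carrier G" "y \<in> carrier G"
    and "word_dist G S \<one> y = 1"
  shows "y \<in> S \<union> (\<lambda>s. inv s) ` S"
proof -
  obtain w where w: "length w = 1" "fst ` set w \<subseteq> S" "word_eval G w = inv \<one> \<otimes> y"
    using word_dist_witness[OF assms(1,2) one_closed assms(3)] assms(4) by metis
  then obtain x e where "w = [(x, e)]"
    by (metis length_0_conv length_Suc_conv One_nat_def surj_pair)
  with w assms(1,3) show ?thesis by (auto split: if_splits)
qed

lemma CW_isometry_generator:
  assumes "CW_isometry G S T" "T \<one> = \<one>"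
    and "S \<subseteq> carrier G" "finite S" "\<one> \<notin> S" "generate G S = carrier G" "s \<in> S"
  shows "T s \<in> S \<union> (\<lambda>s. inv s) ` S"
proof (rule word_dist_eq_1_imp_letter)
  show "T s \<in> carrier G"
    using assms(1,3,7) unfolding CW_isometry_def by auto
  have "word_dist G S (T \<one>) (T s) = cardinal_norm G S s"
    using assms(1,3,7) unfolding CW_isometry_def cardinal_dist_def by auto
  then show "word_dist G S \<one> (T s) = 1"
    using assms(2,4,5,7) cardinal_norm_generator by simp
qed (use assms in auto)

end

theorem mainTheorem8:
  fixes G (structure) and S :: "'a set" and T :: "'a \<Rightarrow> 'a"
  assumes "group G"
    and "S \<subseteq> carrier G" and "finite S" and "\<one> \<notin> S"
    and "generate G S = carrier G"
    and "CW_isometry G S T"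
  shows "\<exists>a\<in>carrier G. \<exists>T'. CW_isometry G S T' \<and> T' \<one> = \<one> \<and>
           T' ` S \<subseteq> S \<union> (\<lambda>s. inv s) ` S \<and>
           (\<forall>g\<in>carrier G. T g = a \<otimes> T' g) \<and>
           (\<forall>g\<in>carrier G. \<forall>h\<in>carrier G. word_dist G S (T' g) (T' h) \<le> word_dist G S g h)"
proof -
  interpret group G by fact
  define a where "a = T \<one>"
  define T' where "T' = (\<lambda>g. inv a \<otimes> T g)"
  have a: "a \<in> carrier G" and T: "T \<in> carrier G \<rightarrow> carrier G"
    using assms(6) unfolding a_def CW_isometry_def by auto
  have iso: "CW_isometry G S T'"
    unfolding T'_def using CW_isometry_left_mult[OF assms(6)] a by simp
  have one: "T' \<one> = \<one>"
    unfolding T'_def a_def using a a_def by simp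
  have "T g = a \<otimes> T' g" if "g \<in> carrier G" for g
    unfolding T'_def using a T that by (simp add: Pi_iff flip: m_assoc)
  then show ?thesis
    using a iso one CW_isometry_generator[OF iso one assms(2-5)]
      CW_isometry_nonexpansive[OF iso assms(2,5)] by blast
qed

end
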